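(* For $t>0$ let $\tilde f_t(z)=\exp(-t/(z+1))$, $z\in\mathbb{C}_+$. Then \[\|\tilde f_t\|_{\mathcal{B}}=\begin{cases}2-e^{-t},&t\in(0,1],\\ 2-e^{-1}+e^{-1}\log t,&t>1.\end{cases}\]
   Context: $\mathbb{C}_+=\{\Re z>0\}$. For holomorphic $f$ on $\mathbb{C}_+$, $\|f\|_{\mathcal{B}}=\sup_{z\in\mathbb{C}_+}|f(z)|+\int_0^\infty\sup_{y\in\mathbb{R}}|f'(x+iy)|\,dx$. *)

theory Defs
  imports "HOL-Analysis.Analysis"
begin

definition right_half_plane :: "complex set" where
  "right_half_plane = {z. Re z > 0}"

text \<open>Valued in [0,infinity] (ennreal), since it may be infinite.\<close>
definition B_norm :: "(complex \<Rightarrow> complex) \<Rightarrow> ennreal" where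
  "B_norm f =
     (SUP z\<in>right_half_plane. ennreal (cmod (f z))) +
     (\<integral>\<^sup>+ x\<in>{0<..}. (SUP y::real. ennreal (cmod (deriv f (Complex x y)))) \<partial>lborel)"

definition f_tilde :: "real \<Rightarrow> complex \<Rightarrow> complex" where
  "f_tilde t z = exp (- complex_of_real t / (z + 1))"

end

theory Submission imports Defs "HOL-Real_Asymp.Real_Asymp" begin

text \<open>Since \<open>f' = t/(z+1)\<^sup>2 f\<close>, on the vertical line \<open>Re (z + 1) = a\<close> one has
  \<open>|f'(z)| = u exp (-a u)\<close> with \<open>u = t/|z+1|\<^sup>2\<close> ranging over \<open>(0, t/a\<^sup>2]\<close>. This is maximal at
  \<open>u = 1/a\<close> when \<open>a \<le> t\<close> and at the endpoint \<open>y = 0\<close> otherwise. Hence the integrand of the norm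
  is \<open>e\<^sup>-\<^sup>1/(x+1)\<close> on \<open>(0, t-1]\<close>, contributing \<open>e\<^sup>-\<^sup>1 log t\<close>, and the derivative of
  \<open>exp (-t/(x+1))\<close> beyond, contributing its total increase \<open>1 - exp (-t / max 1 t)\<close>.
  The sup-norm term is \<open>1\<close>, approached along the real axis.\<close>

lemma mult_exp_neg_le_exp_neg_one:
  fixes v :: real
  shows "v * exp (- v) \<le> exp (-1)"
proof -
  have "v * exp (- v) \<le> exp (v - 1) * exp (- v)"
    using exp_ge_add_one_self[of "v - 1"] by (intro mult_right_mono) auto
  also have "\<dots> = exp (-1)" by (simp flip: exp_add)
  finally show ?thesis .
qed

lemma mult_exp_neg_mono:
  fixes a u v :: real
  assumes "0 \<le> u" "u \<le> v" "a * v \<le> 1"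
  shows "u * exp (- a * u) \<le> v * exp (- a * v)"
proof (rule DERIV_nonneg_imp_nondecreasing[OF \<open>u \<le> v\<close>])
  fix w assume "u \<le> w" "w \<le> v"
  then have "a * w \<le> 1"
    using assms by (smt (verit) mult_left_mono mult_nonneg_nonneg mult_nonpos_nonneg)
  then show "\<exists>d. ((\<lambda>u. u * exp (- a * u)) has_real_derivative d) (at w) \<and> 0 \<le> d"
    by (intro exI conjI) (auto intro!: derivative_eq_intros simp: algebra_simps)
qed

lemma Re_of_real_divide: "Re (of_real t / w) = t * Re w / (cmod w)\<^sup>2"
  by (simp add: Re_divide')

lemma nn_integral_lborel_indicator_insert:
  fixes c :: real
  shows "(\<integral>\<^sup>+x. f x * indicator (insert c A) x \<partial>lborel) = (\<integral>\<^sup>+x. f x * indicator A x \<partial>lborel)"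
  by (intro nn_integral_cong_AE eventually_mono[OF AE_lborel_singleton[of c]])
     (auto simp: indicator_def)

lemma deriv_f_tilde:
  assumes "z + 1 \<noteq> 0"
  shows "deriv (f_tilde t) z = of_real t / (z + 1)\<^sup>2 * f_tilde t z"
proof -
  have "1 + z \<noteq> 0" using assms by (simp add: add.commute)
  then have "(f_tilde t has_field_derivative of_real t / (z + 1)\<^sup>2 * f_tilde t z) (at z)"
    using assms unfolding f_tilde_def[abs_def]
    by (auto intro!: derivative_eq_intros simp: power2_eq_square field_simps)
  then show ?thesis by (rule DERIV_imp_deriv)
qed

lemma norm_f_tilde: "cmod (f_tilde t z) = exp (- t * Re (z + 1) / (cmod (z + 1))\<^sup>2)"
  by (simp add: f_tilde_def Re_of_real_divide)

lemma norm_deriv_f_tilde: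
  assumes "z + 1 \<noteq> 0"
  shows "cmod (deriv (f_tilde t) z) =
           \<bar>t\<bar> / (cmod (z + 1))\<^sup>2 * exp (- t * Re (z + 1) / (cmod (z + 1))\<^sup>2)"
  by (simp add: deriv_f_tilde[OF assms] norm_mult norm_divide norm_power norm_f_tilde)

lemma SUP_norm_f_tilde:
  assumes "t > 0"
  shows "(SUP z\<in>right_half_plane. ennreal (cmod (f_tilde t z))) = 1"
proof (rule antisym)
  show "(SUP z\<in>right_half_plane. ennreal (cmod (f_tilde t z))) \<le> 1"
  proof (rule SUP_least)
    fix z assume "z \<in> right_half_plane"
    then have "- t * Re (z + 1) / (cmod (z + 1))\<^sup>2 \<le> 0"
      using assms by (auto simp: right_half_plane_def intro!: divide_nonpos_nonneg)
    then show "ennreal (cmod (f_tilde t z)) \<le> 1"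
      by (simp add: norm_f_tilde)
  qed
next
  have "((\<lambda>n. ennreal (exp (- t / (real n + 1)))) \<longlonglongrightarrow> ennreal 1)"
    by (intro tendsto_ennrealI) real_asymp
  moreover have "cmod (f_tilde t (of_nat n)) = exp (- t / (real n + 1))" for n
  proof -
    have "of_nat n + 1 = complex_of_real (real n + 1)" by simp
    then show ?thesis by (simp only: norm_f_tilde Re_complex_of_real norm_of_real) (simp add: power2_eq_square)
  qed
  ultimately have "((\<lambda>n. ennreal (cmod (f_tilde t (of_nat n)))) \<longlonglongrightarrow> 1)"
    by simp
  moreover have "ennreal (cmod (f_tilde t (of_nat n))) \<le> (SUP z\<in>right_half_plane. ennreal (cmod (f_tilde t z)))"
    if "n \<ge> 1" for n
    using that by (intro SUP_upper) (simp add: right_half_plane_def)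
  ultimately show "1 \<le> (SUP z\<in>right_half_plane. ennreal (cmod (f_tilde t z)))"
    by (intro LIMSEQ_le_const2) auto
qed

definition deriv_peak :: "real \<Rightarrow> real \<Rightarrow> real" where
  "deriv_peak t a = (if a \<le> t then exp (-1) / a else t / a\<^sup>2 * exp (- t / a))"

lemma profile_le_deriv_peak:
  assumes "t > 0" "a > 0" "s \<ge> a\<^sup>2"
  shows "t / s * exp (- t * a / s) \<le> deriv_peak t a"
proof -
  have "s > 0" using assms by (smt (verit) zero_less_power)
  define u where "u = t / s"
  have "u > 0" using \<open>s > 0\<close> assms by (simp add: u_def)
  have profile_eq: "t / s * exp (- t * a / s) = u * exp (- a * u)" by (simp add: u_def)
  show ?thesis
  proof (cases "a \<le> t")
    case True
    have "u * exp (- a * u) = (a * u) * exp (- (a * u)) / a" using \<open>a > 0\<close> by simp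
    also have "\<dots> \<le> exp (-1) / a"
      using \<open>a > 0\<close> by (intro divide_right_mono mult_exp_neg_le_exp_neg_one) auto
    finally show ?thesis using True unfolding profile_eq deriv_peak_def by simp
  next
    case False
    have "u \<le> t / a\<^sup>2" unfolding u_def using assms \<open>s > 0\<close> by (intro divide_left_mono) auto
    moreover have "a * (t / a\<^sup>2) \<le> 1" using False assms by (simp add: power2_eq_square field_simps)
    ultimately have "u * exp (- a * u) \<le> t / a\<^sup>2 * exp (- a * (t / a\<^sup>2))"
      using \<open>u > 0\<close> by (intro mult_exp_neg_mono) auto
    also have "- a * (t / a\<^sup>2) = - t / a" using \<open>a > 0\<close> by (simp add: power2_eq_square)
    finally show ?thesis using False unfolding profile_eq deriv_peak_def by simp
  qed
qed

lemma profile_attains_deriv_peak: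
  assumes "t > 0" "a > 0"
  obtains s where "s \<ge> a\<^sup>2" "t / s * exp (- t * a / s) = deriv_peak t a"
proof (cases "a \<le> t")
  case True
  have "t * a \<ge> a\<^sup>2" using True assms by (simp add: power2_eq_square mult_right_mono)
  with that[of "t * a"] show ?thesis using True assms by (simp add: deriv_peak_def)
next
  case False
  with that[of "a\<^sup>2"] show ?thesis using assms by (simp add: deriv_peak_def power2_eq_square)
qed

lemma SUP_norm_deriv_f_tilde:
  assumes "t > 0" "x \<ge> 0"
  shows "(SUP y. ennreal (cmod (deriv (f_tilde t) (Complex x y)))) = ennreal (deriv_peak t (x + 1))"
proof -
  have norm_eq: "cmod (deriv (f_tilde t) (Complex x y)) =
      t / ((x + 1)\<^sup>2 + y\<^sup>2) * exp (- t * (x + 1) / ((x + 1)\<^sup>2 + y\<^sup>2))" for y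
  proof -
    have "Complex x y + 1 = Complex (x + 1) y" by (simp add: complex_eq_iff)
    moreover have "Complex (x + 1) y \<noteq> 0" using assms by (simp add: complex_eq_iff)
    ultimately show ?thesis using assms by (simp add: norm_deriv_f_tilde cmod_power2)
  qed
  show ?thesis
  proof (rule antisym)
    show "(SUP y. ennreal (cmod (deriv (f_tilde t) (Complex x y)))) \<le> ennreal (deriv_peak t (x + 1))"
    proof (intro SUP_least ennreal_leI)
      fix y
      show "cmod (deriv (f_tilde t) (Complex x y)) \<le> deriv_peak t (x + 1)"
        unfolding norm_eq using assms by (intro profile_le_deriv_peak) auto
    qed
  next
    obtain s where s: "s \<ge> (x + 1)\<^sup>2" "t / s * exp (- t * (x + 1) / s) = deriv_peak t (x + 1)"
      using profile_attains_deriv_peak[of t "x + 1"] assms by auto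
    have s_eq: "(x + 1)\<^sup>2 + (sqrt (s - (x + 1)\<^sup>2))\<^sup>2 = s" using s(1) by simp
    have "cmod (deriv (f_tilde t) (Complex x (sqrt (s - (x + 1)\<^sup>2)))) = deriv_peak t (x + 1)"
      by (simp only: norm_eq s_eq s(2))
    then show "ennreal (deriv_peak t (x + 1)) \<le> (SUP y. ennreal (cmod (deriv (f_tilde t) (Complex x y))))"
      by (metis SUP_upper UNIV_I)
  qed
qed

lemma nn_integral_harmonic_Ioc:
  assumes "c \<ge> 0" "b \<ge> 0"
  shows "(\<integral>\<^sup>+x\<in>{0<..b}. ennreal (c / (x + 1)) \<partial>lborel) = ennreal (c * ln (b + 1))"
proof -
  have "{0..b} = insert 0 {0<..b}" using assms by auto
  then have "(\<integral>\<^sup>+x\<in>{0<..b}. ennreal (c / (x + 1)) \<partial>lborel) =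
        (\<integral>\<^sup>+x\<in>{0..b}. ennreal (c / (x + 1)) \<partial>lborel)"
    by (simp only: nn_integral_lborel_indicator_insert)
  also have "\<dots> = ennreal (c * ln (b + 1) - c * ln (0 + 1))"
    using assms
    by (intro nn_integral_FTC_Icc) (auto intro!: derivative_eq_intros simp: field_simps)
  finally show ?thesis by simp
qed

lemma nn_integral_exp_neg_div_Ioi:
  assumes "t \<ge> 0" "b > -1"
  shows "(\<integral>\<^sup>+x\<in>{b<..}. ennreal (t / (x + 1)\<^sup>2 * exp (- t / (x + 1))) \<partial>lborel)
          = ennreal (1 - exp (- t / (b + 1)))"
proof -
  have "{b..} = insert b {b<..}" by auto
  then have "(\<integral>\<^sup>+x\<in>{b<..}. ennreal (t / (x + 1)\<^sup>2 * exp (- t / (x + 1))) \<partial>lborel) =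
        (\<integral>\<^sup>+x\<in>{b..}. ennreal (t / (x + 1)\<^sup>2 * exp (- t / (x + 1))) \<partial>lborel)"
    by (simp only: nn_integral_lborel_indicator_insert)
  also have "\<dots> = ennreal (1 - exp (- t / (b + 1)))"
  proof (rule nn_integral_FTC_atLeast)
    show "((\<lambda>x::real. exp (- t / (x + 1))) \<longlongrightarrow> 1) at_top" by real_asymp
    fix x assume "b \<le> x"
    then have "x + 1 \<noteq> 0" using assms by simp
    then show "((\<lambda>x. exp (- t / (x + 1))) has_real_derivative t / (x + 1)\<^sup>2 * exp (- t / (x + 1))) (at x)"
      by (auto intro!: derivative_eq_intros simp: power2_eq_square field_simps)
  qed (use assms in auto)
  finally show ?thesis .
qed

text \<open>For \<open>x > 0\<close> the first branch of \<open>deriv_peak t (x + 1)\<close> is taken exactly when \<open>x \<le> max 1 t - 1\<close>,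
  so both regimes \<open>t \<le> 1\<close> and \<open>t > 1\<close> are integrated at once.\<close>
lemma nn_integral_SUP_norm_deriv_f_tilde:
  assumes "t > 0"
  defines "m \<equiv> max 1 t"
  shows "(\<integral>\<^sup>+ x\<in>{0<..}. (SUP y. ennreal (cmod (deriv (f_tilde t) (Complex x y)))) \<partial>lborel)
     = ennreal (1 - exp (- t / m) + exp (-1) * ln m)"
proof -
  have "m \<ge> 1" by (simp add: m_def)
  have split: "(SUP y. ennreal (cmod (deriv (f_tilde t) (Complex x y)))) * indicator {0<..} x =
      ennreal (exp (-1) / (x + 1)) * indicator {0<..m - 1} x +
      ennreal (t / (x + 1)\<^sup>2 * exp (- t / (x + 1))) * indicator {m - 1<..} x" for x
    using assms by (cases "x > 0") (auto simp: SUP_norm_deriv_f_tilde deriv_peak_def indicator_def)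
  have "(\<integral>\<^sup>+ x\<in>{0<..}. (SUP y. ennreal (cmod (deriv (f_tilde t) (Complex x y)))) \<partial>lborel) =
      (\<integral>\<^sup>+x\<in>{0<..m - 1}. ennreal (exp (-1) / (x + 1)) \<partial>lborel) +
      (\<integral>\<^sup>+x\<in>{m - 1<..}. ennreal (t / (x + 1)\<^sup>2 * exp (- t / (x + 1))) \<partial>lborel)"
    unfolding split by (rule nn_integral_add) auto
  also have "\<dots> = ennreal (exp (-1) * ln m) + ennreal (1 - exp (- t / m))"
    using nn_integral_harmonic_Ioc[of "exp (-1)" "m - 1"] nn_integral_exp_neg_div_Ioi[of t "m - 1"]
      assms \<open>m \<ge> 1\<close> by simp
  also have "\<dots> = ennreal (1 - exp (- t / m) + exp (-1) * ln m)"
    using assms by (subst ennreal_plus[symmetric]) auto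
  finally show ?thesis .
qed

theorem lemma3p4:
  fixes t :: real
  assumes "t > 0"
  shows "B_norm (f_tilde t) =
           (if t \<le> 1 then ennreal (2 - exp (- t))
            else ennreal (2 - exp (-1) + exp (-1) * ln t))"
proof -
  have "B_norm (f_tilde t) = ennreal 1 + ennreal (1 - exp (- t / max 1 t) + exp (-1) * ln (max 1 t))"
    unfolding B_norm_def SUP_norm_f_tilde[OF assms] nn_integral_SUP_norm_deriv_f_tilde[OF assms]
    by simp
  also have "\<dots> = ennreal (1 + (1 - exp (- t / max 1 t) + exp (-1) * ln (max 1 t)))"
    using assms by (intro ennreal_plus[symmetric]) auto
  also have "1 + (1 - exp (- t / max 1 t) + exp (-1) * ln (max 1 t)) =
      (if t \<le> 1 then 2 - exp (- t) else 2 - exp (-1) + exp (-1) * ln t)"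
    by (simp add: max_def)
  finally show ?thesis by simp
qed

end
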